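(* Let $G$ be a compact abelian group which is a torsion group (every element has finite order), and let $K \subset \widehat{G}$. Then $K$ is strictly positive definite if and only if $K$ is ubiquitous.
   Context: A trigonometric polynomial on $\widehat{G}$ is a function of the form $\gamma \mapsto \sum_{i=1}^n c_i \gamma(x_i)$ with $x_i \in G$, $c_i \in \mathbb{C}$. A subset $K \subset \widehat{G}$ is strictly positive definite if the only trigonometric polynomial on $\widehat{G}$ vanishing at every point of $K$ is the identically zero function. A subset $K \subset \widehat{G}$ is ubiquitous if for every subgroup $H$ of $\widehat{G}$ of finite index and every $\gamma \in \widehat{G}$ the coset $\gamma H$ meets $K$. *)

theory Defs
  imports "HOL-Analysis.Analysis" "HOL-Algebra.Coset"
begin

definition characters :: "('a::topological_ab_group_add \<Rightarrow> complex) set" where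
  "characters = {\<gamma>. continuous_on UNIV \<gamma> \<and> (\<forall>x y. \<gamma> (x + y) = \<gamma> x * \<gamma> y)
                      \<and> (\<forall>x. norm (\<gamma> x) = 1)}"

definition dual_group :: "('a::topological_ab_group_add \<Rightarrow> complex) monoid" where
  "dual_group = \<lparr>carrier = characters, mult = (\<lambda>\<gamma> \<eta> x. \<gamma> x * \<eta> x), one = (\<lambda>x. 1)\<rparr>"

definition trig_poly :: "'a set \<Rightarrow> ('a \<Rightarrow> complex) \<Rightarrow> ('a \<Rightarrow> complex) \<Rightarrow> complex" where
  "trig_poly S c \<gamma> = (\<Sum>x\<in>S. c x * \<gamma> x)"

definition strictly_positive_definite :: "('a::topological_ab_group_add \<Rightarrow> complex) set \<Rightarrow> bool" where
  "strictly_positive_definite K \<longleftrightarrow>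
     (\<forall>S c. finite S \<longrightarrow> (\<forall>\<gamma>\<in>K. trig_poly S c \<gamma> = 0) \<longrightarrow>
            (\<forall>\<gamma>\<in>characters. trig_poly S c \<gamma> = 0))"

definition ubiquitous :: "('a::topological_ab_group_add \<Rightarrow> complex) set \<Rightarrow> bool" where
  "ubiquitous K \<longleftrightarrow>
     (\<forall>H. subgroup H dual_group \<and> finite (rcosets\<^bsub>dual_group\<^esub> H) \<longrightarrow>
        (\<forall>\<gamma>\<in>carrier dual_group. (\<gamma> <#\<^bsub>dual_group\<^esub> H) \<inter> K \<noteq> {}))"

end

theory Submission
  imports Defs
begin

text \<open>
  The analytic input is that every character of \<open>G\<close> has finite range: its range is a compact,
  countable subgroup of the circle, hence finite by the Baire category theorem. Combined with
  the cyclicity of finite groups of roots of unity, this yields a duality statement: a subgroup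
  \<open>H\<close> of the dual contains every character that is trivial on the annihilator of \<open>H\<close>.

  If \<open>K\<close> is ubiquitous and a trigonometric polynomial with frequencies \<open>S\<close> vanishes on \<open>K\<close>,
  then the characters trivial on \<open>S\<close> form a subgroup of finite index; each of its cosets meets
  \<open>K\<close>, and the polynomial is constant on cosets, so it vanishes everywhere. Conversely, if a
  coset \<open>\<gamma>\<^sub>0 H\<close> of a finite-index subgroup misses \<open>K\<close>, duality produces a trigonometric
  polynomial vanishing off \<open>\<gamma>\<^sub>0 H\<close> (so on \<open>K\<close>) but not at \<open>\<gamma>\<^sub>0\<close>.
\<close>

lemma charD:
  assumes "\<gamma> \<in> characters"
  shows "\<gamma> (x + y) = \<gamma> x * \<gamma> y" "norm (\<gamma> x) = 1" "continuous_on UNIV \<gamma>"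
  using assms by (auto simp: characters_def)

lemma char_0:
  assumes "\<gamma> \<in> characters"
  shows "\<gamma> 0 = 1"
proof -
  have "\<gamma> 0 = \<gamma> 0 * \<gamma> 0" using charD(1)[OF assms, of 0 0] by simp
  moreover have "\<gamma> 0 \<noteq> 0" using charD(2)[OF assms, of 0] by auto
  ultimately show ?thesis by simp
qed

lemma unit_mult_cnj: "norm (z::complex) = 1 \<Longrightarrow> z * cnj z = 1"
  by (metis complex_norm_square of_real_1 power_one)

lemma unit_cnj_mult: "norm (z::complex) = 1 \<Longrightarrow> cnj z * z = 1"
  using unit_mult_cnj by (simp add: mult.commute)

lemma unit_mult_cnj_eq_1_iff:
  assumes "norm (w::complex) = 1"
  shows "z * cnj w = 1 \<longleftrightarrow> z = w"
proof
  assume "z * cnj w = 1"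
  hence "z * (cnj w * w) = w" by (simp add: mult.assoc[symmetric])
  thus "z = w" using unit_cnj_mult[OF assms] by simp
qed (use unit_mult_cnj[OF assms] in simp)

lemma char_uminus:
  assumes "\<gamma> \<in> characters"
  shows "\<gamma> (-x) = cnj (\<gamma> x)"
proof -
  have "\<gamma> (-x) * \<gamma> x = 1" using charD(1)[OF assms, of "-x" x] char_0[OF assms] by simp
  hence "\<gamma> (-x) * \<gamma> x * cnj (\<gamma> x) = cnj (\<gamma> x)" by simp
  thus ?thesis using unit_mult_cnj[OF charD(2)[OF assms]] by (simp add: mult.assoc)
qed

lemma char_diff: "\<gamma> \<in> characters \<Longrightarrow> \<gamma> (x - y) = \<gamma> x * cnj (\<gamma> y)"
  using charD(1)[of \<gamma> x "-y"] by (simp add: char_uminus)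

lemma char_sum: "\<gamma> \<in> characters \<Longrightarrow> \<gamma> (\<Sum>i<n. x) = \<gamma> x ^ n"
  by (induction n) (auto simp: char_0 charD(1))

lemma char_mult_cnj_eq_1_iff: "\<rho> \<in> characters \<Longrightarrow> z * cnj (\<rho> y) = 1 \<longleftrightarrow> z = \<rho> y"
  using unit_mult_cnj_eq_1_iff charD(2) by blast

lemma char_mult_closed:
  "\<gamma> \<in> characters \<Longrightarrow> \<eta> \<in> characters \<Longrightarrow> (\<lambda>x. \<gamma> x * \<eta> x) \<in> characters"
  unfolding characters_def by (auto intro!: continuous_on_mult simp: norm_mult)

lemma char_cnj_closed: "\<gamma> \<in> characters \<Longrightarrow> (\<lambda>x. cnj (\<gamma> x)) \<in> characters"
  unfolding characters_def by (auto intro!: continuous_on_cnj)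

lemma char_one: "(\<lambda>x. 1) \<in> characters"
  unfolding characters_def by auto

lemma dual_simps [simp]:
  "carrier dual_group = characters" "mult dual_group = (\<lambda>\<gamma> \<eta> x. \<gamma> x * \<eta> x)"
  "one dual_group = (\<lambda>x. 1)"
  by (auto simp: dual_group_def)

lemma dual_comm_group: "comm_group (dual_group :: ('a::topological_ab_group_add \<Rightarrow> complex) monoid)"
proof (rule comm_groupI)
  fix \<gamma> :: "'a \<Rightarrow> complex" assume \<gamma>: "\<gamma> \<in> carrier dual_group"
  have "(\<lambda>x. cnj (\<gamma> x) * \<gamma> x) = (\<lambda>x. 1)"
    using \<gamma> by (auto simp: unit_cnj_mult charD(2))
  thus "\<exists>\<eta>\<in>carrier dual_group. \<eta> \<otimes>\<^bsub>dual_group\<^esub> \<gamma> = \<one>\<^bsub>dual_group\<^esub>"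
    using \<gamma> char_cnj_closed by fastforce
qed (auto simp: char_mult_closed char_one mult.assoc mult.commute)

lemma dual_group: "group dual_group"
  using dual_comm_group comm_group.axioms(2) by blast

lemma dual_inv: "\<gamma> \<in> characters \<Longrightarrow> inv\<^bsub>dual_group\<^esub> \<gamma> = (\<lambda>x. cnj (\<gamma> x))"
  by (rule group.inv_equality[OF dual_group]) (simp_all add: char_cnj_closed charD(2) unit_cnj_mult)

lemma dual_rcoset_iff:
  assumes "subgroup H dual_group" "\<gamma> \<in> characters" "\<rho> \<in> characters"
  shows "\<gamma> \<in> H #>\<^bsub>dual_group\<^esub> \<rho> \<longleftrightarrow> (\<lambda>x. \<gamma> x * cnj (\<rho> x)) \<in> H"
  using subgroup.rcos_module[OF assms(1) dual_group, of \<rho> \<gamma>] assms by (simp add: dual_inv)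

lemma dual_lcoset_eq_rcoset: "\<gamma> <#\<^bsub>dual_group\<^esub> H = H #>\<^bsub>dual_group\<^esub> \<gamma>"
  unfolding l_coset_def r_coset_def by (simp add: mult.commute)

section \<open>Characters of a compact torsion group have finite range\<close>

lemma char_pow_eq_1:
  fixes n :: nat
  assumes "\<gamma> \<in> characters" "(\<Sum>i<n. x) = 0"
  shows "\<gamma> x ^ n = 1"
  using char_sum[OF assms(1), where n=n and x=x] assms(2) char_0[OF assms(1)] by simp

lemma char_torsion_root:
  fixes \<gamma> :: "'a::topological_ab_group_add \<Rightarrow> complex"
  assumes tors: "\<forall>x::'a. \<exists>n::nat. n > 0 \<and> (\<Sum>i<n. x) = 0"
    and \<gamma>: "\<gamma> \<in> characters"
  shows "\<exists>n>0. \<gamma> x ^ n = 1"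
  using tors char_pow_eq_1[OF \<gamma>] by blast

lemma countable_closed_has_isolated_point:
  fixes S :: "'a::{real_normed_vector, heine_borel} set"
  assumes "closed S" "countable S" "S \<noteq> {}"
  shows "\<exists>v\<in>S. \<not> v islimpt S"
proof (rule ccontr)
  assume "\<not> ?thesis"
  hence limpt: "v islimpt S" if "v \<in> S" for v using that by blast
  define \<G> where "\<G> = (\<lambda>v. S - {v}) ` S"
  have "S \<subseteq> closure (\<Inter>\<G>)"
  proof (rule Baire[OF \<open>closed S\<close>])
    show "countable \<G>" using \<open>countable S\<close> by (simp add: \<G>_def)
  next
    fix T assume "T \<in> \<G>"
    then obtain v where v: "v \<in> S" "T = S - {v}" by (auto simp: \<G>_def)
    have "openin (top_of_set S) T"
      using v openin_open_Int[of "- {v}" S] by (simp add: open_Compl Diff_eq)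
    moreover have "S \<subseteq> closure T"
    proof -
      have S: "S = insert v T" using v by blast
      hence "v islimpt T" using limpt[OF v(1)] islimpt_insert by metis
      hence "v \<in> closure T" by (simp add: closure_def)
      thus ?thesis using S closure_subset by blast
    qed
    ultimately show "openin (top_of_set S) T \<and> S \<subseteq> closure T" by blast
  qed
  moreover have "\<Inter>\<G> = {}" using \<open>S \<noteq> {}\<close> by (auto simp: \<G>_def)
  ultimately show False using \<open>S \<noteq> {}\<close> by simp
qed

text \<open>A compact countable subgroup of the unit circle is finite: by Baire it has an isolated
  point, by homogeneity every point is isolated, and by compactness it is then finite.
  The subgroup property is phrased as closure under \<open>u * cnj v * w\<close>.\<close>

lemma countable_compact_circle_subgroup_finite:
  fixes V :: "complex set"
  assumes "compact V" "countable V" "1 \<in> V"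
    and unit: "\<And>v. v \<in> V \<Longrightarrow> norm v = 1"
    and closed_mult: "\<And>u v w. u \<in> V \<Longrightarrow> v \<in> V \<Longrightarrow> w \<in> V \<Longrightarrow> u * cnj v * w \<in> V"
  shows "finite V"
proof -
  have "closed V" using \<open>compact V\<close> compact_imp_closed by blast
  then obtain v0 where v0: "v0 \<in> V" "\<not> v0 islimpt V"
    using countable_closed_has_isolated_point \<open>countable V\<close> \<open>1 \<in> V\<close> by blast
  have no_limpt: "\<not> u islimpt V" for u
  proof
    assume u: "u islimpt V"
    hence "u \<in> V" using \<open>closed V\<close> closed_limpt by blast
    define c where "c = v0 * cnj u"
    have c_unit: "norm c = 1" using unit[OF v0(1)] unit[OF \<open>u \<in> V\<close>] by (simp add: c_def norm_mult)
    have cu: "c * u = v0" using unit_cnj_mult[OF unit[OF \<open>u \<in> V\<close>]] by (simp add: c_def mult.assoc)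
    have "v0 islimpt V"
      unfolding islimpt_approachable
    proof (intro allI impI)
      fix e :: real assume "0 < e"
      then obtain y where y: "y \<in> V" "y \<noteq> u" "dist y u < e"
        using u unfolding islimpt_approachable by blast
      have "c * y \<in> V" using closed_mult[OF v0(1) \<open>u \<in> V\<close> y(1)] by (simp add: c_def)
      moreover have "dist (c * y) v0 = dist y u"
        unfolding dist_norm cu[symmetric] by (simp add: right_diff_distrib[symmetric] norm_mult c_unit)
      moreover have "c * y \<noteq> v0" using y(2) cu c_unit by auto
      ultimately show "\<exists>x'\<in>V. x' \<noteq> v0 \<and> dist x' v0 < e" using y(3) by metis
    qed
    with v0(2) show False by simp
  qed
  show "finite V"
    using Heine_Borel_imp_Bolzano_Weierstrass[OF \<open>compact V\<close> _ subset_refl] no_limpt by blast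
qed

lemma char_finite_range:
  fixes \<gamma> :: "'a::topological_ab_group_add \<Rightarrow> complex"
  assumes cpt: "compact (UNIV::'a set)"
    and tors: "\<forall>x::'a. \<exists>n::nat. n > 0 \<and> (\<Sum>i<n. x) = 0"
    and \<gamma>: "\<gamma> \<in> characters"
  shows "finite (range \<gamma>)"
proof (rule countable_compact_circle_subgroup_finite)
  show "compact (range \<gamma>)" using compact_continuous_image[OF charD(3)[OF \<gamma>] cpt] .
  have "range \<gamma> \<subseteq> (\<Union>n. {z. z ^ Suc n = 1})"
  proof
    fix v assume "v \<in> range \<gamma>"
    then obtain x where "v = \<gamma> x" by blast
    then obtain n where "n > 0" "v ^ n = 1" using char_torsion_root[OF tors \<gamma>, of x] by blast
    thus "v \<in> (\<Union>n. {z. z ^ Suc n = 1})" by (intro UN_I[of "n - 1"]) auto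
  qed
  moreover have "countable (\<Union>n. {z::complex. z ^ Suc n = 1})"
  proof (rule countable_UN)
    show "countable {z::complex. z ^ Suc n = 1}" for n
      by (rule countable_finite, rule finite_roots_unity) simp
  qed simp
  ultimately show "countable (range \<gamma>)" using countable_subset by blast
  show "1 \<in> range \<gamma>" using char_0[OF \<gamma>] by (metis rangeI)
  show "norm v = 1" if "v \<in> range \<gamma>" for v using that charD(2)[OF \<gamma>] by blast
  show "u * cnj v * w \<in> range \<gamma>"
    if uvw: "u \<in> range \<gamma>" "v \<in> range \<gamma>" "w \<in> range \<gamma>" for u v w
  proof -
    obtain a b c where "u = \<gamma> a" "v = \<gamma> b" "w = \<gamma> c" using uvw by blast
    hence "u * cnj v * w = \<gamma> ((a - b) + c)" by (simp add: charD(1)[OF \<gamma>] char_diff[OF \<gamma>])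
    thus ?thesis by blast
  qed
qed

lemma char_bounded_exponent:
  fixes \<gamma> :: "'a::topological_ab_group_add \<Rightarrow> complex"
  assumes cpt: "compact (UNIV::'a set)"
    and tors: "\<forall>x::'a. \<exists>n::nat. n > 0 \<and> (\<Sum>i<n. x) = 0"
    and \<gamma>: "\<gamma> \<in> characters"
  shows "\<exists>N>0. \<forall>x. \<gamma> x ^ N = 1"
proof -
  have "\<forall>v\<in>range \<gamma>. \<exists>n>0. v ^ n = 1" using char_torsion_root[OF tors \<gamma>] by blast
  then obtain ord where ord: "\<And>v. v \<in> range \<gamma> \<Longrightarrow> ord v > (0::nat) \<and> v ^ ord v = 1"
    by metis
  define N where "N = (\<Prod>v\<in>range \<gamma>. ord v)"
  have "N > 0" unfolding N_def using ord by (intro prod_pos) blast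
  moreover have "\<gamma> x ^ N = 1" for x
  proof -
    have "ord (\<gamma> x) dvd N"
      unfolding N_def using char_finite_range[OF cpt tors \<gamma>] by (intro dvd_prodI) auto
    then obtain k where "N = ord (\<gamma> x) * k" by (auto simp: dvd_def)
    thus ?thesis using ord[of "\<gamma> x"] by (simp add: power_mult)
  qed
  ultimately show ?thesis by blast
qed

section \<open>Finite subgroups of roots of unity are cyclic\<close>

lemma root_unity_power_of_cis:
  assumes "n > 0" "z ^ n = 1"
  shows "\<exists>k. z = cis (2 * pi / n) ^ k"
proof -
  obtain k where "z = cis (2 * pi * real k / real n)"
    using Complex.bij_betw_roots_unity[OF assms(1)] assms(2) unfolding bij_betw_def by auto
  also have "\<dots> = cis (2 * pi / n) ^ k" unfolding Complex.DeMoivre by (simp add: field_simps)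
  finally show ?thesis by blast
qed

text \<open>Let \<open>W\<close> be a subgroup of the \<open>N\<close>-th roots of unity and \<open>\<omega> = cis (2\<pi>/N)\<close>. The exponents
  \<open>k\<close> with \<open>\<omega> ^ k \<in> W\<close> are exactly the multiples of the least positive one, \<open>d\<close>: the
  remainder of \<open>k\<close> modulo \<open>d\<close> is again such an exponent.\<close>

lemma roots_unity_subgroup_exponents:
  fixes W :: "complex set" and N :: nat
  assumes N: "N > 0" and "1 \<in> W"
    and W_quot: "\<And>u v. u \<in> W \<Longrightarrow> v \<in> W \<Longrightarrow> u * cnj v \<in> W"
  obtains d where "d > 0" "d dvd N" "cis (2 * pi / N) ^ d \<in> W"
    "\<And>k. cis (2 * pi / N) ^ k \<in> W \<Longrightarrow> d dvd k"
proof -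
  define \<omega> where "\<omega> = cis (2 * pi / N)"
  have \<omega>_N: "\<omega> ^ N = 1" unfolding \<omega>_def Complex.DeMoivre using N by simp
  have W_mult: "u * v \<in> W" if "u \<in> W" "v \<in> W" for u v
    using W_quot[OF that(1) W_quot[OF \<open>1 \<in> W\<close> that(2)]] by simp
  have W_pow: "u ^ q \<in> W" if "u \<in> W" for u q
    by (induction q) (simp_all add: \<open>1 \<in> W\<close> W_mult that)
  define d where "d = (LEAST k. 0 < k \<and> \<omega> ^ k \<in> W)"
  have "0 < d \<and> \<omega> ^ d \<in> W"
    unfolding d_def by (rule LeastI_ex) (use N \<omega>_N \<open>1 \<in> W\<close> in metis)
  hence d: "0 < d" "\<omega> ^ d \<in> W" by auto
  have d_dvd: "d dvd k" if k: "\<omega> ^ k \<in> W" for k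
  proof -
    have split: "\<omega> ^ k = \<omega> ^ (k mod d) * (\<omega> ^ d) ^ (k div d)"
      by (metis mod_div_mult_eq power_add power_mult mult.commute)
    have "norm ((\<omega> ^ d) ^ (k div d)) = 1" by (simp add: \<omega>_def norm_power)
    hence "(\<omega> ^ d) ^ (k div d) * cnj ((\<omega> ^ d) ^ (k div d)) = 1" by (rule unit_mult_cnj)
    hence "\<omega> ^ (k mod d) = \<omega> ^ k * cnj ((\<omega> ^ d) ^ (k div d))"
      unfolding split by (simp add: mult.assoc)
    hence "\<omega> ^ (k mod d) \<in> W" using W_quot[OF k W_pow[OF d(2)]] by simp
    moreover have "k mod d < d" using d(1) by simp
    ultimately have "k mod d = 0"
      using not_less_Least[of "k mod d" "\<lambda>k. 0 < k \<and> \<omega> ^ k \<in> W"] unfolding d_def by auto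
    thus ?thesis by auto
  qed
  show thesis
    using that d d_dvd d_dvd[of N] \<omega>_N \<open>1 \<in> W\<close> unfolding \<omega>_def by simp
qed

text \<open>Hence \<open>W\<close> is cyclic, generated by \<open>\<zeta> = \<omega> ^ d\<close> of order \<open>m = N / d\<close>, and every \<open>m\<close>-th root
  of unity is a power of \<open>\<zeta>\<close>.\<close>

lemma roots_unity_subgroup_cyclic:
  fixes W :: "complex set" and N :: nat
  assumes N: "N > 0" and W_roots: "W \<subseteq> {z. z ^ N = 1}" and "1 \<in> W"
    and W_quot: "\<And>u v. u \<in> W \<Longrightarrow> v \<in> W \<Longrightarrow> u * cnj v \<in> W"
  obtains \<zeta> m where "m > 0" "\<zeta> \<in> W" "\<zeta> ^ m = 1" "\<And>w. w \<in> W \<Longrightarrow> \<exists>q. w = \<zeta> ^ q"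
    "\<And>z. z ^ m = 1 \<Longrightarrow> \<exists>j. z = \<zeta> ^ j"
proof -
  define \<omega> where "\<omega> = cis (2 * pi / N)"
  obtain d where d: "d > 0" "d dvd N" "\<omega> ^ d \<in> W" and d_dvd: "\<And>k. \<omega> ^ k \<in> W \<Longrightarrow> d dvd k"
    using roots_unity_subgroup_exponents[OF N \<open>1 \<in> W\<close> W_quot] unfolding \<omega>_def by blast
  then obtain m where N_eq: "N = d * m" by blast
  have "m > 0" using N N_eq by (cases m) auto
  show thesis
  proof (rule that)
    show "m > 0" "\<omega> ^ d \<in> W" by fact+
    show "(\<omega> ^ d) ^ m = 1" unfolding \<omega>_def Complex.DeMoivre N_eq using d(1) \<open>m > 0\<close> by simp
  next
    fix w assume "w \<in> W"
    then obtain k where k: "w = \<omega> ^ k"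
      using root_unity_power_of_cis[OF N] W_roots by (auto simp: \<omega>_def)
    then obtain q where "k = d * q" using d_dvd \<open>w \<in> W\<close> by blast
    thus "\<exists>q. w = (\<omega> ^ d) ^ q" using k by (auto simp: power_mult)
  next
    fix z :: complex assume "z ^ m = 1"
    then obtain j where j: "z = cis (2 * pi / m) ^ j"
      using root_unity_power_of_cis \<open>m > 0\<close> by blast
    have "cis (2 * pi / m) = \<omega> ^ d"
      unfolding \<omega>_def Complex.DeMoivre using N_eq d(1) \<open>m > 0\<close> by (simp add: field_simps)
    thus "\<exists>j. z = (\<omega> ^ d) ^ j" using j by auto
  qed
qed

section \<open>Subgroups of the dual and their annihilators\<close>

definition add_subgroup :: "'a::ab_group_add set \<Rightarrow> bool" where
  "add_subgroup A \<longleftrightarrow> 0 \<in> A \<and> (\<forall>x\<in>A. \<forall>y\<in>A. x + y \<in> A \<and> x - y \<in> A)"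

lemma add_subgroup_sum:
  fixes n :: nat
  shows "add_subgroup A \<Longrightarrow> x \<in> A \<Longrightarrow> (\<Sum>i<n. x) \<in> A"
  by (induction n) (auto simp: add_subgroup_def)

lemma add_subgroup_diff: "add_subgroup A \<Longrightarrow> x \<in> A \<Longrightarrow> y \<in> A \<Longrightarrow> x - y \<in> A"
  by (auto simp: add_subgroup_def)

text \<open>If \<open>\<kappa>\<close> is trivial on the part of \<open>A\<close> where \<open>\<eta>\<close> is trivial, then \<open>\<kappa>\<close> is a power of
  \<open>\<eta>\<close> on \<open>A\<close>: \<open>\<kappa>\<close> factors through the finite cyclic group \<open>\<eta> ` A\<close>, and every character
  of a cyclic group is a power of the generating one.\<close>

lemma char_power_on_subgroup:
  fixes \<eta> \<kappa> :: "'a::topological_ab_group_add \<Rightarrow> complex"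
  assumes \<eta>: "\<eta> \<in> characters" and "N > 0" and \<eta>_exp: "\<And>x. \<eta> x ^ N = 1"
    and \<kappa>: "\<kappa> \<in> characters" and A: "add_subgroup A"
    and ker: "\<And>x. x \<in> A \<Longrightarrow> \<eta> x = 1 \<Longrightarrow> \<kappa> x = 1"
  shows "\<exists>a. \<forall>x\<in>A. \<kappa> x = \<eta> x ^ a"
proof -
  have factors: "\<kappa> x = \<kappa> y" if "x \<in> A" "y \<in> A" "\<eta> x = \<eta> y" for x y
  proof -
    have "\<eta> (x - y) = 1" using that(3) char_mult_cnj_eq_1_iff[OF \<eta>] by (simp add: char_diff[OF \<eta>])
    hence "\<kappa> (x - y) = 1" using ker add_subgroup_diff[OF A that(1,2)] by blast
    thus ?thesis using char_mult_cnj_eq_1_iff[OF \<kappa>] by (simp add: char_diff[OF \<kappa>])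
  qed
  have "0 \<in> A" using A by (simp add: add_subgroup_def)
  obtain \<zeta> m where m: "m > 0" and \<zeta>: "\<zeta> \<in> \<eta> ` A" "\<zeta> ^ m = 1"
    and gen: "\<And>w. w \<in> \<eta> ` A \<Longrightarrow> \<exists>q. w = \<zeta> ^ q"
    and roots: "\<And>z. z ^ m = 1 \<Longrightarrow> \<exists>j. z = \<zeta> ^ j"
  proof (rule roots_unity_subgroup_cyclic[of N "\<eta> ` A"])
    show "\<eta> ` A \<subseteq> {z. z ^ N = 1}" using \<eta>_exp by auto
    show "1 \<in> \<eta> ` A" using \<open>0 \<in> A\<close> char_0[OF \<eta>] by (metis image_eqI)
    show "u * cnj v \<in> \<eta> ` A" if "u \<in> \<eta> ` A" "v \<in> \<eta> ` A" for u v
      using that add_subgroup_diff[OF A] by (auto simp: char_diff[OF \<eta>, symmetric])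
  qed (use \<open>N > 0\<close> in auto)
  obtain x0 where x0: "x0 \<in> A" "\<eta> x0 = \<zeta>" using \<zeta>(1) by blast
  have "\<kappa> x0 ^ m = \<kappa> (\<Sum>i<m. x0)" by (simp add: char_sum[OF \<kappa>])
  also have "\<dots> = \<kappa> 0"
    using factors[OF add_subgroup_sum[OF A x0(1)] \<open>0 \<in> A\<close>] \<zeta>(2) x0(2)
    by (simp add: char_sum[OF \<eta>] char_0[OF \<eta>])
  finally obtain a where a: "\<kappa> x0 = \<zeta> ^ a" using roots char_0[OF \<kappa>] by auto
  have "\<kappa> x = \<eta> x ^ a" if x: "x \<in> A" for x
  proof -
    obtain q where q: "\<eta> x = \<zeta> ^ q" using gen x by blast
    have "\<kappa> x = \<kappa> (\<Sum>i<q. x0)"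
      using factors[OF x add_subgroup_sum[OF A x0(1)]] q x0(2) by (simp add: char_sum[OF \<eta>])
    also have "\<dots> = \<eta> x ^ a" using a q by (simp add: char_sum[OF \<kappa>] power_mult[symmetric] mult.commute)
    finally show ?thesis .
  qed
  thus ?thesis by blast
qed

lemma dual_subgroup_pow_closed:
  assumes "subgroup H dual_group" "\<eta> \<in> H"
  shows "(\<lambda>x. \<eta> x ^ (a::nat)) \<in> H"
proof (induction a)
  case 0
  show ?case using subgroup.one_closed[OF assms(1)] by simp
next
  case (Suc a)
  have "(\<lambda>x. \<eta> x ^ a) \<otimes>\<^bsub>dual_group\<^esub> \<eta> \<in> H" by (rule subgroup.m_closed[OF assms(1) Suc assms(2)])
  thus ?case by (simp add: mult.commute)
qed

text \<open>Induction on \<open>F\<close>, passing to the kernel of the new character.\<close>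

lemma char_agrees_with_subgroup_element:
  fixes H :: "('a::topological_ab_group_add \<Rightarrow> complex) set"
  assumes H: "subgroup H dual_group"
    and exp: "\<And>\<eta>. \<eta> \<in> H \<Longrightarrow> \<exists>N>0. \<forall>x. \<eta> x ^ N = 1"
    and "finite F" "F \<subseteq> H" "add_subgroup A" "\<kappa> \<in> characters"
    and ker: "\<And>x. x \<in> A \<Longrightarrow> (\<forall>\<eta>\<in>F. \<eta> x = 1) \<Longrightarrow> \<kappa> x = 1"
  shows "\<exists>h\<in>H. \<forall>x\<in>A. \<kappa> x = h x"
  using \<open>finite F\<close> \<open>F \<subseteq> H\<close> \<open>add_subgroup A\<close> \<open>\<kappa> \<in> characters\<close> ker
proof (induction F arbitrary: A \<kappa> rule: finite_induct)
  case empty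
  have "(\<lambda>x. 1) \<in> H" using subgroup.one_closed[OF H] by simp
  thus ?case using empty.prems(4) by auto
next
  case (insert \<eta> F)
  have "\<eta> \<in> H" "F \<subseteq> H" using insert.prems(1) by auto
  have \<eta>: "\<eta> \<in> characters" using subgroup.subset[OF H] \<open>\<eta> \<in> H\<close> by auto
  define A1 where "A1 = {x\<in>A. \<eta> x = 1}"
  have "add_subgroup A1" using insert.prems(2) char_0[OF \<eta>]
    by (auto simp: add_subgroup_def A1_def charD(1)[OF \<eta>] char_diff[OF \<eta>])
  hence "\<exists>h1\<in>H. \<forall>x\<in>A1. \<kappa> x = h1 x"
    by (rule insert.IH[OF \<open>F \<subseteq> H\<close> _ insert.prems(3)]) (use insert.prems(4) in \<open>auto simp: A1_def\<close>)
  then obtain h1 where h1: "h1 \<in> H" "\<forall>x\<in>A1. \<kappa> x = h1 x" by blast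
  have h1_char: "h1 \<in> characters" using subgroup.subset[OF H] h1(1) by auto
  define \<kappa>' where "\<kappa>' = (\<lambda>x. \<kappa> x * cnj (h1 x))"
  have "\<kappa>' \<in> characters" unfolding \<kappa>'_def
    by (intro char_mult_closed char_cnj_closed insert.prems(3) h1_char)
  moreover have "\<kappa>' x = 1" if "x \<in> A" "\<eta> x = 1" for x
    using h1(2) that char_mult_cnj_eq_1_iff[OF h1_char] by (simp add: \<kappa>'_def A1_def)
  moreover obtain N where "N > 0" "\<forall>x. \<eta> x ^ N = 1" using exp[OF \<open>\<eta> \<in> H\<close>] by blast
  ultimately obtain a where a: "\<forall>x\<in>A. \<kappa>' x = \<eta> x ^ a"
    using char_power_on_subgroup[OF \<eta>, of N \<kappa>' A] insert.prems(2) by blast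
  define h where "h = h1 \<otimes>\<^bsub>dual_group\<^esub> (\<lambda>x. \<eta> x ^ a)"
  have "h \<in> H"
    unfolding h_def by (rule subgroup.m_closed[OF H h1(1) dual_subgroup_pow_closed[OF H \<open>\<eta> \<in> H\<close>]])
  moreover have "\<kappa> x = h x" if "x \<in> A" for x
  proof -
    have "\<kappa> x = \<kappa>' x * h1 x"
      using unit_cnj_mult[OF charD(2)[OF h1_char]] by (simp add: \<kappa>'_def mult.assoc)
    thus ?thesis using a that by (simp add: h_def mult.commute)
  qed
  ultimately show ?case by blast
qed

definition annihilator :: "('a::topological_ab_group_add \<Rightarrow> complex) set \<Rightarrow> 'a set" where
  "annihilator H = {x. \<forall>\<eta>\<in>H. \<eta> x = 1}"

text \<open>The set where \<open>\<kappa> \<noteq> 1\<close> is compact (\<open>\<kappa>\<close> has finite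
  range) and is covered by the open sets \<open>{\<eta> \<noteq> 1}\<close>, \<open>\<eta> \<in> H\<close>; finitely many of them suffice,
  and the previous lemma applies to them with \<open>A = UNIV\<close>.\<close>

lemma char_trivial_on_annihilator_mem:
  fixes H :: "('a::topological_ab_group_add \<Rightarrow> complex) set"
  assumes cpt: "compact (UNIV::'a set)"
    and tors: "\<forall>x::'a. \<exists>n::nat. n > 0 \<and> (\<Sum>i<n. x) = 0"
    and H: "subgroup H dual_group" and \<kappa>: "\<kappa> \<in> characters"
    and triv: "\<And>x. x \<in> annihilator H \<Longrightarrow> \<kappa> x = 1"
  shows "\<kappa> \<in> H"
proof -
  have H_chars: "\<eta> \<in> characters" if "\<eta> \<in> H" for \<eta> using subgroup.subset[OF H] that by auto
  define Z where "Z = {x. \<kappa> x \<noteq> 1}"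
  have "Z = \<kappa> -` (range \<kappa> - {1})" unfolding Z_def by auto
  moreover have "closed (range \<kappa> - {1})"
    using char_finite_range[OF cpt tors \<kappa>] by (intro finite_imp_closed) simp
  ultimately have "closed Z" using closed_vimage charD(3)[OF \<kappa>] by metis
  hence "compact Z" using compact_Int_closed[OF cpt] by (metis inf_top_left)
  moreover have "Z \<subseteq> (\<Union>\<eta>\<in>H. {x. \<eta> x \<noteq> 1})" using triv unfolding Z_def annihilator_def by blast
  moreover have "open {x. \<eta> x \<noteq> 1}" if "\<eta> \<in> H" for \<eta>
    using open_Collect_neq[OF charD(3)[OF H_chars[OF that]] continuous_on_const] .
  ultimately obtain F where F: "F \<subseteq> H" "finite F" "Z \<subseteq> (\<Union>\<eta>\<in>F. {x. \<eta> x \<noteq> 1})"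
    using compactE_image[of Z H "\<lambda>\<eta>. {x. \<eta> x \<noteq> 1}"] by metis
  have "add_subgroup (UNIV :: 'a set)" by (simp add: add_subgroup_def)
  then obtain h where "h \<in> H" "\<forall>x. \<kappa> x = h x"
    using char_agrees_with_subgroup_element[OF H _ F(2,1) _ \<kappa>] F(3)
      char_bounded_exponent[OF cpt tors H_chars] unfolding Z_def by blast
  thus ?thesis by (metis ext)
qed

lemma dual_rcoset_agree_on_annihilator:
  assumes H: "subgroup H dual_group" and \<gamma>: "\<gamma> \<in> characters"
    and \<rho>: "\<rho> \<in> H #>\<^bsub>dual_group\<^esub> \<gamma>" and x: "x \<in> annihilator H"
  shows "\<rho> x = \<gamma> x"
proof -
  have "\<rho> \<in> characters" using subgroup.elemrcos_carrier[OF H dual_group] \<gamma> \<rho> by simp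
  hence "(\<lambda>y. \<rho> y * cnj (\<gamma> y)) \<in> H" using dual_rcoset_iff[OF H _ \<gamma>] \<rho> by simp
  thus ?thesis using x char_mult_cnj_eq_1_iff[OF \<gamma>] by (auto simp: annihilator_def)
qed

lemma rcoset_separating_point:
  fixes H :: "('a::topological_ab_group_add \<Rightarrow> complex) set"
  assumes cpt: "compact (UNIV::'a set)"
    and tors: "\<forall>x::'a. \<exists>n::nat. n > 0 \<and> (\<Sum>i<n. x) = 0"
    and H: "subgroup H dual_group" and \<gamma>0: "\<gamma>0 \<in> characters"
    and C: "C \<in> rcosets\<^bsub>dual_group\<^esub> H" "C \<noteq> H #>\<^bsub>dual_group\<^esub> \<gamma>0"
  shows "\<exists>\<rho>\<in>C. \<exists>x\<in>annihilator H. \<rho> x \<noteq> \<gamma>0 x"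
proof -
  obtain \<rho> where \<rho>: "\<rho> \<in> characters" "C = H #>\<^bsub>dual_group\<^esub> \<rho>"
    using C(1) unfolding RCOSETS_def by auto
  have "(\<lambda>x. \<rho> x * cnj (\<gamma>0 x)) \<notin> H"
  proof
    assume "(\<lambda>x. \<rho> x * cnj (\<gamma>0 x)) \<in> H"
    hence "\<rho> \<in> H #>\<^bsub>dual_group\<^esub> \<gamma>0" using dual_rcoset_iff[OF H \<rho>(1) \<gamma>0] by simp
    hence "H #>\<^bsub>dual_group\<^esub> \<gamma>0 = C"
      using group.repr_independence[OF dual_group _ _ H] \<gamma>0 \<rho>(2) by simp
    with C(2) show False by simp
  qed
  then obtain x where "x \<in> annihilator H" "\<rho> x * cnj (\<gamma>0 x) \<noteq> 1"
    using char_trivial_on_annihilator_mem[OF cpt tors H char_mult_closed[OF \<rho>(1) char_cnj_closed[OF \<gamma>0]]]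
    by blast
  moreover have "\<rho> \<in> C" using group.rcos_self[OF dual_group _ H] \<rho> by simp
  ultimately show ?thesis using char_mult_cnj_eq_1_iff[OF \<gamma>0] by blast
qed

section \<open>Trigonometric polynomials on the dual group\<close>

definition trig_function :: "(('a::topological_ab_group_add \<Rightarrow> complex) \<Rightarrow> complex) \<Rightarrow> bool" where
  "trig_function f \<longleftrightarrow> (\<exists>S c. finite S \<and> (\<forall>\<gamma>\<in>characters. f \<gamma> = trig_poly S c \<gamma>))"

text \<open>Frequencies may be listed with repetitions: collect the coefficients of equal frequencies.\<close>

lemma trig_function_indexed:
  fixes p :: "'i \<Rightarrow> 'a::topological_ab_group_add" and c :: "'i \<Rightarrow> complex"
  assumes "finite I"
  shows "trig_function (\<lambda>\<gamma>. \<Sum>i\<in>I. c i * \<gamma> (p i))"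
proof -
  define c' where "c' y = (\<Sum>i\<in>{i\<in>I. p i = y}. c i)" for y
  have "(\<Sum>i\<in>I. c i * \<gamma> (p i)) = trig_poly (p ` I) c' \<gamma>" for \<gamma> :: "'a \<Rightarrow> complex"
  proof -
    have "(\<Sum>i\<in>I. c i * \<gamma> (p i)) = (\<Sum>y\<in>p ` I. \<Sum>i\<in>{i\<in>I. p i = y}. c i * \<gamma> (p i))"
      by (rule sum.image_gen[OF \<open>finite I\<close>])
    also have "\<dots> = (\<Sum>y\<in>p ` I. c' y * \<gamma> y)"
      unfolding c'_def sum_distrib_right by (intro sum.cong refl) auto
    finally show ?thesis unfolding trig_poly_def .
  qed
  thus ?thesis unfolding trig_function_def using \<open>finite I\<close> by blast
qed

text \<open>Products, constants minus evaluations, and finite products of trigonometric functions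
  are trigonometric functions; products use \<open>\<gamma> x * \<gamma> y = \<gamma> (x + y)\<close>.\<close>

lemma trig_function_mult:
  assumes "trig_function f" "trig_function g"
  shows "trig_function (\<lambda>\<gamma>. f \<gamma> * g \<gamma>)"
proof -
  obtain S c where S: "finite S" "\<forall>\<gamma>\<in>characters. f \<gamma> = trig_poly S c \<gamma>"
    using assms(1) unfolding trig_function_def by blast
  obtain T d where T: "finite T" "\<forall>\<gamma>\<in>characters. g \<gamma> = trig_poly T d \<gamma>"
    using assms(2) unfolding trig_function_def by blast
  define P where "P \<gamma> = (\<Sum>(x, y)\<in>S \<times> T. (c x * d y) * \<gamma> (x + y))" for \<gamma> :: "'a \<Rightarrow> complex"
  have "trig_function P"
    using trig_function_indexed[of "S \<times> T" "\<lambda>(x, y). c x * d y" "\<lambda>(x, y). x + y"] S(1) T(1)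
    unfolding P_def by (simp add: case_prod_beta')
  moreover have "f \<gamma> * g \<gamma> = P \<gamma>" if \<gamma>: "\<gamma> \<in> characters" for \<gamma>
  proof -
    have "f \<gamma> * g \<gamma> = (\<Sum>x\<in>S. c x * \<gamma> x) * (\<Sum>y\<in>T. d y * \<gamma> y)"
      using S(2) T(2) \<gamma> unfolding trig_poly_def by simp
    also have "\<dots> = (\<Sum>(x, y)\<in>S \<times> T. (c x * \<gamma> x) * (d y * \<gamma> y))"
      by (simp add: sum_product sum.cartesian_product)
    also have "\<dots> = P \<gamma>"
      unfolding P_def by (intro sum.cong refl) (auto simp: charD(1)[OF \<gamma>] mult_ac)
    finally show ?thesis .
  qed
  ultimately show ?thesis unfolding trig_function_def by simp
qed

lemma trig_function_eval_minus_const: "trig_function (\<lambda>\<gamma>. \<gamma> x - a)"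
proof -
  have "trig_function (\<lambda>\<gamma>. \<Sum>b\<in>UNIV. (if b then 1 else - a) * \<gamma> (if b then x else 0))"
    by (rule trig_function_indexed) simp
  moreover have "(\<Sum>b\<in>UNIV. (if b then 1 else - a) * \<gamma> (if b then x else 0)) = \<gamma> x - a"
    if "\<gamma> \<in> characters" for \<gamma>
    using char_0[OF that] by (simp add: UNIV_bool)
  ultimately show ?thesis unfolding trig_function_def by simp
qed

lemma trig_function_prod:
  assumes "finite B" "\<And>C. C \<in> B \<Longrightarrow> trig_function (f C)"
  shows "trig_function (\<lambda>\<gamma>. \<Prod>C\<in>B. f C \<gamma>)"
  using assms
proof (induction B rule: finite_induct)
  case empty
  show ?case unfolding trig_function_def
    by (rule exI[of _ "{0}"], rule exI[of _ "\<lambda>_. 1"]) (simp add: trig_poly_def char_0)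
next
  case (insert C B)
  thus ?case using trig_function_mult[of "f C" "\<lambda>\<gamma>. \<Prod>C\<in>B. f C \<gamma>"] by simp
qed

section \<open>Ubiquitous sets are strictly positive definite\<close>

lemma finite_image_factor:
  assumes "finite (g ` A)" and factor: "\<And>x y. x \<in> A \<Longrightarrow> y \<in> A \<Longrightarrow> g x = g y \<Longrightarrow> f x = f y"
  shows "finite (f ` A)"
proof -
  define sel where "sel v = (SOME x. x \<in> A \<and> g x = v)" for v
  have "f ` A \<subseteq> (\<lambda>v. f (sel v)) ` (g ` A)"
  proof
    fix y assume "y \<in> f ` A"
    then obtain x where x: "x \<in> A" "y = f x" by blast
    have "sel (g x) \<in> A \<and> g (sel (g x)) = g x"
      unfolding sel_def by (rule someI[of _ x]) (simp add: x(1))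
    hence "f (sel (g x)) = y" using factor x by metis
    thus "y \<in> (\<lambda>v. f (sel v)) ` (g ` A)" using x(1) by blast
  qed
  thus ?thesis using \<open>finite (g ` A)\<close> finite_surj by blast
qed

definition dual_annihilator :: "'a set \<Rightarrow> ('a::topological_ab_group_add \<Rightarrow> complex) set" where
  "dual_annihilator S = {\<eta>\<in>characters. \<forall>x\<in>S. \<eta> x = 1}"

lemma dual_annihilator_subgroup: "subgroup (dual_annihilator S) dual_group"
proof (rule group.subgroupI[OF dual_group])
  show "dual_annihilator S \<subseteq> carrier dual_group" "dual_annihilator S \<noteq> {}"
    unfolding dual_annihilator_def using char_one by auto
next
  fix a assume "a \<in> dual_annihilator S"
  thus "inv\<^bsub>dual_group\<^esub> a \<in> dual_annihilator S"
    unfolding dual_annihilator_def by (auto simp: dual_inv char_cnj_closed)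
next
  fix a b assume "a \<in> dual_annihilator S" "b \<in> dual_annihilator S"
  thus "a \<otimes>\<^bsub>dual_group\<^esub> b \<in> dual_annihilator S"
    unfolding dual_annihilator_def by (auto simp: char_mult_closed)
qed

text \<open>On a torsion group, the annihilator of a finite set \<open>S\<close> has finite index: the coset of a
  character is determined by its restriction to \<open>S\<close>, and these restrictions take values in
  finitely many roots of unity.\<close>

lemma dual_annihilator_finite_index:
  fixes S :: "'a::topological_ab_group_add set"
  assumes tors: "\<forall>x::'a. \<exists>n::nat. n > 0 \<and> (\<Sum>i<n. x) = 0" and "finite S"
  shows "finite (rcosets\<^bsub>dual_group\<^esub> dual_annihilator S)"
proof -
  have "finite ((\<lambda>a. dual_annihilator S #>\<^bsub>dual_group\<^esub> a) ` characters)"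
  proof (rule finite_image_factor)
    obtain n :: "'a \<Rightarrow> nat" where n: "\<And>x. n x > 0 \<and> (\<Sum>i<n x. x) = 0"
      using choice[OF tors] by blast
    have "restrict a S \<in> PiE S (\<lambda>x. {z. z ^ n x = 1})" if "a \<in> characters" for a
      using char_pow_eq_1[OF that n[THEN conjunct2]] by simp
    hence "(\<lambda>a. restrict a S) ` characters \<subseteq> PiE S (\<lambda>x. {z. z ^ n x = 1})" by blast
    moreover have "finite (PiE S (\<lambda>x. {z::complex. z ^ n x = 1}))"
      using \<open>finite S\<close> n[THEN conjunct1]
      by (intro finite_PiE finite_roots_unity) (auto simp: Suc_le_eq)
    ultimately show "finite ((\<lambda>a. restrict a S) ` characters)" by (rule finite_subset)
  next
    fix a b :: "'a \<Rightarrow> complex"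
    assume ab: "a \<in> characters" "b \<in> characters" "restrict a S = restrict b S"
    hence "\<forall>x\<in>S. a x = b x" by (metis restrict_apply')
    hence "(\<lambda>x. a x * cnj (b x)) \<in> dual_annihilator S"
      using ab(1,2) char_mult_cnj_eq_1_iff[OF ab(2)]
      by (auto simp: dual_annihilator_def intro!: char_mult_closed char_cnj_closed)
    hence "a \<in> dual_annihilator S #>\<^bsub>dual_group\<^esub> b"
      using dual_rcoset_iff[OF dual_annihilator_subgroup ab(1,2)] by simp
    hence "dual_annihilator S #>\<^bsub>dual_group\<^esub> b = dual_annihilator S #>\<^bsub>dual_group\<^esub> a"
      using group.repr_independence[OF dual_group _ _ dual_annihilator_subgroup] ab(2) by simp
    thus "dual_annihilator S #>\<^bsub>dual_group\<^esub> a = dual_annihilator S #>\<^bsub>dual_group\<^esub> b" ..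
  qed
  thus ?thesis by (simp add: RCOSETS_def UNION_singleton_eq_range)
qed

text \<open>By ubiquity, every coset of the annihilator of the frequencies \<open>S\<close> meets \<open>K\<close>, and a
  trigonometric polynomial with frequencies in \<open>S\<close> is constant on these cosets.\<close>

lemma ubiquitous_imp_strictly_positive_definite:
  fixes K :: "('a::topological_ab_group_add \<Rightarrow> complex) set"
  assumes tors: "\<forall>x::'a. \<exists>n::nat. n > 0 \<and> (\<Sum>i<n. x) = 0"
    and ubiq: "ubiquitous K"
  shows "strictly_positive_definite K"
  unfolding strictly_positive_definite_def
proof (intro allI impI ballI)
  fix S :: "'a set" and c :: "'a \<Rightarrow> complex" and \<gamma> :: "'a \<Rightarrow> complex"
  assume S: "finite S" and vanish: "\<forall>\<gamma>\<in>K. trig_poly S c \<gamma> = 0" and \<gamma>: "\<gamma> \<in> characters"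
  obtain k where k: "k \<in> K" "k \<in> dual_annihilator S #>\<^bsub>dual_group\<^esub> \<gamma>"
    using ubiq dual_annihilator_subgroup dual_annihilator_finite_index[OF tors S] \<gamma>
    unfolding ubiquitous_def dual_lcoset_eq_rcoset by fastforce
  have "S \<subseteq> annihilator (dual_annihilator S)"
    by (auto simp: annihilator_def dual_annihilator_def)
  hence "\<forall>x\<in>S. k x = \<gamma> x"
    using dual_rcoset_agree_on_annihilator[OF dual_annihilator_subgroup \<gamma> k(2)] by blast
  hence "trig_poly S c \<gamma> = trig_poly S c k" unfolding trig_poly_def by simp
  thus "trig_poly S c \<gamma> = 0" using vanish k(1) by simp
qed

section \<open>Strictly positive definite sets are ubiquitous\<close>

text \<open>For a subgroup \<open>H\<close> of finite index and a character \<open>\<gamma>\<^sub>0\<close> there is a trigonometric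
  polynomial vanishing off the coset of \<open>\<gamma>\<^sub>0\<close> but not at \<open>\<gamma>\<^sub>0\<close>: for each other coset pick a
  representative \<open>\<rho>\<close> and a point \<open>x\<close> annihilated by \<open>H\<close> with \<open>\<rho> x \<noteq> \<gamma>\<^sub>0 x\<close>; the product
  of the factors \<open>\<gamma> x - \<rho> x\<close> does the job, since \<open>\<gamma> x\<close> only depends on the coset of \<open>\<gamma>\<close>.\<close>

lemma separating_trig_function:
  fixes H :: "('a::topological_ab_group_add \<Rightarrow> complex) set"
  assumes cpt: "compact (UNIV::'a set)"
    and tors: "\<forall>x::'a. \<exists>n::nat. n > 0 \<and> (\<Sum>i<n. x) = 0"
    and H: "subgroup H dual_group" and "finite (rcosets\<^bsub>dual_group\<^esub> H)"
    and \<gamma>0: "\<gamma>0 \<in> characters"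
  obtains P where "trig_function P" "P \<gamma>0 \<noteq> 0"
    "\<And>\<gamma>. \<gamma> \<in> characters \<Longrightarrow> \<gamma> \<notin> H #>\<^bsub>dual_group\<^esub> \<gamma>0 \<Longrightarrow> P \<gamma> = 0"
proof -
  define B where "B = rcosets\<^bsub>dual_group\<^esub> H - {H #>\<^bsub>dual_group\<^esub> \<gamma>0}"
  have "finite B" using \<open>finite (rcosets\<^bsub>dual_group\<^esub> H)\<close> by (simp add: B_def)
  have "\<exists>\<rho> x. \<rho> \<in> C \<and> x \<in> annihilator H \<and> \<rho> x \<noteq> \<gamma>0 x" if "C \<in> B" for C
    using rcoset_separating_point[OF cpt tors H \<gamma>0] that unfolding B_def by blast
  then obtain \<rho> x where sep: "\<And>C. C \<in> B \<Longrightarrow> \<rho> C \<in> C \<and> x C \<in> annihilator H \<and> \<rho> C (x C) \<noteq> \<gamma>0 (x C)"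
    by metis
  define P where "P \<gamma> = (\<Prod>C\<in>B. \<gamma> (x C) - \<rho> C (x C))" for \<gamma> :: "'a \<Rightarrow> complex"
  show thesis
  proof (rule that)
    show "trig_function P"
      unfolding P_def using \<open>finite B\<close> by (intro trig_function_prod trig_function_eval_minus_const)
    have "\<gamma>0 (x C) - \<rho> C (x C) \<noteq> 0" if "C \<in> B" for C using sep[OF that] by auto
    thus "P \<gamma>0 \<noteq> 0" unfolding P_def using \<open>finite B\<close> by simp
  next
    fix \<gamma> assume \<gamma>: "\<gamma> \<in> characters" "\<gamma> \<notin> H #>\<^bsub>dual_group\<^esub> \<gamma>0"
    define C where "C = H #>\<^bsub>dual_group\<^esub> \<gamma>"
    have "\<gamma> \<in> C" using group.rcos_self[OF dual_group _ H] \<gamma>(1) by (simp add: C_def)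
    hence "C \<in> B"
      using \<gamma> group.rcosetsI[OF dual_group subgroup.subset[OF H]] by (auto simp: B_def C_def)
    hence "\<rho> C (x C) = \<gamma> (x C)"
      using sep dual_rcoset_agree_on_annihilator[OF H \<gamma>(1)] by (simp add: C_def)
    thus "P \<gamma> = 0" unfolding P_def using \<open>finite B\<close> \<open>C \<in> B\<close> by (auto intro: bexI[of _ C])
  qed
qed

text \<open>If a coset \<open>\<gamma>\<^sub>0 H\<close> of finite index missed \<open>K\<close>, the separating polynomial would vanish
  on \<open>K\<close> but not at \<open>\<gamma>\<^sub>0\<close>.\<close>

lemma strictly_positive_definite_imp_ubiquitous:
  fixes K :: "('a::topological_ab_group_add \<Rightarrow> complex) set"
  assumes cpt: "compact (UNIV::'a set)"
    and tors: "\<forall>x::'a. \<exists>n::nat. n > 0 \<and> (\<Sum>i<n. x) = 0"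
    and K: "K \<subseteq> characters" and spd: "strictly_positive_definite K"
  shows "ubiquitous K"
  unfolding ubiquitous_def
proof (intro allI impI ballI)
  fix H :: "('a \<Rightarrow> complex) set" and \<gamma>0 :: "'a \<Rightarrow> complex"
  assume "subgroup H dual_group \<and> finite (rcosets\<^bsub>dual_group\<^esub> H)" "\<gamma>0 \<in> carrier dual_group"
  then obtain P where P: "trig_function P" "P \<gamma>0 \<noteq> 0"
    and P_vanish: "\<And>\<gamma>. \<gamma> \<in> characters \<Longrightarrow> \<gamma> \<notin> H #>\<^bsub>dual_group\<^esub> \<gamma>0 \<Longrightarrow> P \<gamma> = 0"
    using separating_trig_function[OF cpt tors] by (metis dual_simps(1))
  obtain S c where S: "finite S" "\<forall>\<gamma>\<in>characters. P \<gamma> = trig_poly S c \<gamma>"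
    using P(1) unfolding trig_function_def by blast
  show "(\<gamma>0 <#\<^bsub>dual_group\<^esub> H) \<inter> K \<noteq> {}"
  proof
    assume "(\<gamma>0 <#\<^bsub>dual_group\<^esub> H) \<inter> K = {}"
    hence "\<forall>\<gamma>\<in>K. trig_poly S c \<gamma> = 0"
      using K S(2) P_vanish unfolding dual_lcoset_eq_rcoset by fastforce
    hence "trig_poly S c \<gamma>0 = 0"
      using spd S(1) \<open>\<gamma>0 \<in> carrier dual_group\<close> unfolding strictly_positive_definite_def by simp
    thus False using P(2) S(2) \<open>\<gamma>0 \<in> carrier dual_group\<close> by simp
  qed
qed

theorem theorem2p8:
  fixes K :: "('a::{topological_ab_group_add, t2_space} \<Rightarrow> complex) set"
  assumes "compact (UNIV :: 'a set)"
    and "\<forall>x::'a. \<exists>n::nat. n > 0 \<and> (\<Sum>i<n. x) = 0"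
    and "K \<subseteq> characters"
  shows "strictly_positive_definite K \<longleftrightarrow> ubiquitous K"
  using strictly_positive_definite_imp_ubiquitous[OF assms]
    ubiquitous_imp_strictly_positive_definite[OF assms(2)] by blast

end
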